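(* Let $L>0$, let $a$ satisfy (H_a), $h\in L^2(0,L)$, and let $\phi$ satisfy (H_φ), (H_int), (H_bdd) and $\phi(0)=+\infty$. Assume that for every $\eta\in(0,L)$ there exists $M_\eta>0$ with $h(x)\ge -M_\eta$ for a.e. $x\in[0,L-\eta]$. Then every solution $v$ of problem (C) satisfies $v(x)>0$ for all $x\in(0,L)$.
   Context: (H_a): $a\in L^\infty(0,L)$ and there are constants $0<\alpha<\beta$ with $\alpha\le a(x)\le\beta$ for a.e. $x\in(0,L)$. (H_φ): $\phi:\mathbb{R}\to\mathbb{R}\cup\{+\infty\}$ is continuous when $\mathbb{R}\cup\{+\infty\}$ carries its usual topology, and $\phi(s)<+\infty$ for every $s\neq0$. (H_int): $\int_0^\delta\phi(t)\,dt<+\infty$ and $\int_{-\delta}^0\phi(t)\,dt<+\infty$ for every $\delta\in(0,1)$. (H_bdd): for every $\delta>0$, $\phi$ is bounded (and continuous) on $\mathbb{R}\setminus(-\delta,\delta)$. Problem (C) with data $(a,h,\phi)$: find $v\in H^1(0,L)$ with $\phi(v)\in L^2(0,L)$, $a\frac{dv}{dx}=\phi(v)+h$ in $\mathcal D'(0,L)$, $v(0)=0$ (continuous representative). *)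

theory Defs
  imports "HOL-Analysis.Analysis"
begin

definition L2_on :: "real \<Rightarrow> (real \<Rightarrow> real) \<Rightarrow> bool" where
  "L2_on L f \<longleftrightarrow> set_borel_measurable lebesgue {0<..<L} f \<and>
      set_integrable lebesgue {0<..<L} (\<lambda>x. (f x)\<^sup>2)"

definition test_fun :: "real \<Rightarrow> (real \<Rightarrow> real) \<Rightarrow> bool" where
  "test_fun L \<psi> \<longleftrightarrow>
     (\<exists>D :: nat \<Rightarrow> real \<Rightarrow> real. D 0 = \<psi> \<and>
        (\<forall>n x. (D n has_real_derivative D (Suc n) x) (at x))) \<and>
     (\<exists>c d. 0 < c \<and> c \<le> d \<and> d < L \<and> (\<forall>x. x \<notin> {c..d} \<longrightarrow> \<psi> x = 0))"

definition is_weak_deriv :: "real \<Rightarrow> (real \<Rightarrow> real) \<Rightarrow> (real \<Rightarrow> real) \<Rightarrow> bool" where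
  "is_weak_deriv L v g \<longleftrightarrow>
     set_integrable lebesgue {0<..<L} v \<and> set_integrable lebesgue {0<..<L} g \<and>
     (\<forall>\<psi>. test_fun L \<psi> \<longrightarrow>
        (LINT x:{0<..<L}|lebesgue. v x * deriv \<psi> x) = - (LINT x:{0<..<L}|lebesgue. g x * \<psi> x))"

definition H1_on :: "real \<Rightarrow> (real \<Rightarrow> real) \<Rightarrow> bool" where
  "H1_on L v \<longleftrightarrow> L2_on L v \<and> (\<exists>g. L2_on L g \<and> is_weak_deriv L v g)"

definition H_a :: "real \<Rightarrow> (real \<Rightarrow> real) \<Rightarrow> bool" where
  "H_a L a \<longleftrightarrow> set_borel_measurable lebesgue {0<..<L} a \<and>
     (\<exists>\<alpha> \<beta>. 0 < \<alpha> \<and> \<alpha> < \<beta> \<and>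
        (AE x in lebesgue. x \<in> {0<..<L} \<longrightarrow> \<alpha> \<le> a x \<and> a x \<le> \<beta>))"

definition H_phi :: "(real \<Rightarrow> ereal) \<Rightarrow> bool" where
  "H_phi \<phi> \<longleftrightarrow> (\<forall>s. \<phi> s \<noteq> -\<infinity>) \<and> continuous_on UNIV \<phi> \<and> (\<forall>s. s \<noteq> 0 \<longrightarrow> \<phi> s < \<infinity>)"

definition H_int :: "(real \<Rightarrow> ereal) \<Rightarrow> bool" where
  "H_int \<phi> \<longleftrightarrow> (\<forall>\<delta>. 0 < \<delta> \<and> \<delta> < 1 \<longrightarrow>
      set_integrable lebesgue {0<..<\<delta>} (\<lambda>t. real_of_ereal (\<phi> t)) \<and>
      set_integrable lebesgue {-\<delta><..<0} (\<lambda>t. real_of_ereal (\<phi> t)))"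

definition H_bdd :: "(real \<Rightarrow> ereal) \<Rightarrow> bool" where
  "H_bdd \<phi> \<longleftrightarrow> (\<forall>\<delta>>0. (\<exists>B. \<forall>s. \<bar>s\<bar> \<ge> \<delta> \<longrightarrow> \<bar>\<phi> s\<bar> \<le> ereal B) \<and>
      continuous_on {s. \<bar>s\<bar> \<ge> \<delta>} \<phi>)"

text \<open>Problem (C) with data (a,h,phi); v is taken to be the continuous representative on [0,L].\<close>
definition solves_C :: "real \<Rightarrow> (real \<Rightarrow> real) \<Rightarrow> (real \<Rightarrow> real) \<Rightarrow> (real \<Rightarrow> ereal)
    \<Rightarrow> (real \<Rightarrow> real) \<Rightarrow> bool" where
  "solves_C L a h \<phi> v \<longleftrightarrow>
     H1_on L v \<and> continuous_on {0..L} v \<and> v 0 = 0 \<and>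
     (AE x in lebesgue. x \<in> {0<..<L} \<longrightarrow> \<phi> (v x) \<noteq> \<infinity>) \<and>
     L2_on L (\<lambda>x. real_of_ereal (\<phi> (v x))) \<and>
     (\<exists>g. L2_on L g \<and> is_weak_deriv L v g \<and>
        (\<forall>\<psi>. test_fun L \<psi> \<longrightarrow>
           (LINT x:{0<..<L}|lebesgue. a x * g x * \<psi> x) =
           (LINT x:{0<..<L}|lebesgue. (real_of_ereal (\<phi> (v x)) + h x) * \<psi> x)))"

end

theory Submission
  imports Defs "HOL-Computational_Algebra.Polynomial"
begin

text \<open>
  In weak form the equation says that v is the integral of a function g with
  a g = \<phi>(v) + h almost everywhere. Since \<phi> is continuous with \<phi>(0) = +\<infinity>,
  \<phi>(v) exceeds any given bound wherever |v| is small; on [0, L - \<eta>], where h is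
  bounded below, g is therefore almost everywhere positive wherever |v| is small.
  So v is strictly increasing on every interval on which it stays small. Starting
  from v(0) = 0 it becomes positive at once, and it cannot return to 0 later:
  just before its first zero it would be small and hence increasing.
\<close>

section \<open>Smooth test functions\<close>

fun ntimes_differentiable :: "nat \<Rightarrow> (real \<Rightarrow> real) \<Rightarrow> bool" where
  "ntimes_differentiable 0 f = True"
| "ntimes_differentiable (Suc n) f =
     (\<exists>f'. (\<forall>x. (f has_real_derivative f' x) (at x)) \<and> ntimes_differentiable n f')"

lemma ntimes_differentiable_SucD: "ntimes_differentiable (Suc n) f \<Longrightarrow> ntimes_differentiable n f"
proof (induction n arbitrary: f)
  case (Suc n)
  then obtain f' where "\<forall>x. (f has_real_derivative f' x) (at x)" "ntimes_differentiable (Suc n) f'"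
    by auto
  then show ?case using Suc.IH by auto
qed simp

lemma ntimes_differentiable_const: "ntimes_differentiable n (\<lambda>x. c)"
proof (induction n arbitrary: c)
  case (Suc n)
  then show ?case by (auto intro!: exI[of _ "\<lambda>x. 0"])
qed simp

lemma ntimes_differentiable_add:
  "ntimes_differentiable n f \<Longrightarrow> ntimes_differentiable n g \<Longrightarrow> ntimes_differentiable n (\<lambda>x. f x + g x)"
proof (induction n arbitrary: f g)
  case (Suc n)
  then obtain f' g' where "\<forall>x. (f has_real_derivative f' x) (at x)" "ntimes_differentiable n f'"
     "\<forall>x. (g has_real_derivative g' x) (at x)" "ntimes_differentiable n g'" by auto
  then show ?case using Suc.IH
    by (auto intro!: exI[of _ "\<lambda>x. f' x + g' x"] derivative_eq_intros)
qed simp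

lemma ntimes_differentiable_mult:
  "ntimes_differentiable n f \<Longrightarrow> ntimes_differentiable n g \<Longrightarrow> ntimes_differentiable n (\<lambda>x. f x * g x)"
proof (induction n arbitrary: f g)
  case (Suc n)
  then obtain f' g' where d: "\<forall>x. (f has_real_derivative f' x) (at x)" "ntimes_differentiable n f'"
     "\<forall>x. (g has_real_derivative g' x) (at x)" "ntimes_differentiable n g'" by auto
  have "ntimes_differentiable n f" "ntimes_differentiable n g"
    using Suc.prems ntimes_differentiable_SucD by auto
  then have "ntimes_differentiable n (\<lambda>x. f' x * g x + f x * g' x)"
    using Suc.IH d ntimes_differentiable_add by auto
  then show ?case using d
    by (auto intro!: exI[of _ "\<lambda>x. f' x * g x + f x * g' x"] derivative_eq_intros)
qed simp

lemma ntimes_differentiable_compose_affine: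
  "ntimes_differentiable n f \<Longrightarrow> ntimes_differentiable n (\<lambda>x. f (c * x + d))"
proof (induction n arbitrary: f)
  case (Suc n)
  then obtain f' where d: "\<forall>x. (f has_real_derivative f' x) (at x)" "ntimes_differentiable n f'" by auto
  have "ntimes_differentiable n (\<lambda>x. c * f' (c * x + d))"
    using Suc.IH d ntimes_differentiable_mult ntimes_differentiable_const by auto
  moreover have "((\<lambda>x. f (c * x + d)) has_real_derivative c * f' (c * x + d)) (at x)" for x
  proof -
    have "((\<lambda>x. f (c * x + d)) has_real_derivative f' (c * x + d) * c) (at x)"
      by (rule DERIV_chain2[OF d(1)[rule_format]]) (auto intro!: derivative_eq_intros)
    then show ?thesis by (simp add: mult.commute)
  qed
  ultimately show ?case by (auto intro!: exI[of _ "\<lambda>x. c * f' (c * x + d)"])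
qed simp

lemma ntimes_differentiable_divide:
  "ntimes_differentiable n f \<Longrightarrow> (\<And>x. f x \<noteq> 0) \<Longrightarrow> ntimes_differentiable n (\<lambda>x. 1 / f x)"
proof (induction n arbitrary: f)
  case (Suc n)
  then obtain f' where d: "\<forall>x. (f has_real_derivative f' x) (at x)" "ntimes_differentiable n f'" by auto
  have "ntimes_differentiable n (\<lambda>x. 1 / f x)"
    using Suc ntimes_differentiable_SucD by blast
  then have "ntimes_differentiable n (\<lambda>x. (-1) * f' x * (1 / f x) * (1 / f x))"
    by (intro ntimes_differentiable_mult ntimes_differentiable_const d(2))
  moreover have "((\<lambda>x. 1 / f x) has_real_derivative (-1) * f' x * (1 / f x) * (1 / f x)) (at x)" for x
    using d(1) Suc.prems(2)
    by (auto intro!: derivative_eq_intros simp: power2_eq_square field_simps)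
  ultimately show ?case by (auto intro!: exI[of _ "\<lambda>x. (-1) * f' x * (1 / f x) * (1 / f x)"])
qed simp

lemma ntimes_differentiable_all_imp_derivative_chain:
  assumes "\<And>n. ntimes_differentiable n f"
  shows "\<exists>D. D 0 = f \<and> (\<forall>n x. (D n has_real_derivative D (Suc n) x) (at x))"
proof -
  have all: "ntimes_differentiable m ((deriv ^^ n) f)" for n m
  proof (induction n arbitrary: m)
    case (Suc n)
    obtain f' where "\<forall>x. ((deriv ^^ n) f has_real_derivative f' x) (at x)" "ntimes_differentiable m f'"
      using Suc[of "Suc m"] by auto
    moreover have "deriv ((deriv ^^ n) f) = f'"
      using calculation(1) by (auto intro!: DERIV_imp_deriv)
    ultimately show ?case by simp
  qed (simp add: assms)
  have "((deriv ^^ n) f has_real_derivative (deriv ^^ Suc n) f x) (at x)" for n x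
  proof -
    obtain f' where "\<forall>x. ((deriv ^^ n) f has_real_derivative f' x) (at x)"
      using all[where m=1 and n=n] by auto
    moreover have "deriv ((deriv ^^ n) f) = f'"
      using calculation by (auto intro!: DERIV_imp_deriv)
    ultimately show ?thesis by simp
  qed
  then show ?thesis by (intro exI[of _ "\<lambda>n. (deriv ^^ n) f"]) simp
qed

definition poly_exp_inv :: "real poly \<Rightarrow> real \<Rightarrow> real" where
  "poly_exp_inv p x = (if x > 0 then poly p (1/x) * exp (- (1/x)) else 0)"

lemma tendsto_power_poly_exp_0: "((\<lambda>y::real. y ^ k * poly p y * exp (- y)) \<longlongrightarrow> 0) at_top"
proof (induction p arbitrary: k)
  case (pCons a p)
  have "y ^ k * poly (pCons a p) y * exp (- y) = a * (y ^ k / exp y) + y ^ Suc k * poly p y * exp (- y)" for y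
    by (simp add: exp_minus field_simps)
  then show ?case
    using tendsto_add[OF tendsto_mult[OF tendsto_const tendsto_power_div_exp_0[of k]] pCons.IH[of "Suc k"], of a]
    by simp
qed simp

lemma poly_exp_inv_has_real_derivative:
  "(poly_exp_inv p has_real_derivative poly_exp_inv ([:0,0,1:] * (p - pderiv p)) x) (at x)"
proof (cases x "0::real" rule: linorder_cases)
  case equal
  have "((\<lambda>y. y ^ 1 * poly p y * exp (- y)) \<longlongrightarrow> 0) at_top" by (rule tendsto_power_poly_exp_0)
  then have "((\<lambda>h. (inverse h) ^ 1 * poly p (inverse h) * exp (- inverse h)) \<longlongrightarrow> 0) (at_right 0)"
    using filterlim_compose[OF _ filterlim_inverse_at_top_right] by blast
  then have "((\<lambda>h. (poly_exp_inv p (0 + h) - poly_exp_inv p 0) / h) \<longlongrightarrow> 0) (at_right 0)"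
    by (rule Lim_transform_eventually)
       (auto simp: poly_exp_inv_def field_simps intro!: eventually_mono[OF eventually_at_right_less[of 0]])
  moreover have "((\<lambda>h. (poly_exp_inv p (0 + h) - poly_exp_inv p 0) / h) \<longlongrightarrow> 0) (at_left 0)"
    by (rule Lim_transform_eventually[OF tendsto_const[of 0]])
       (auto simp: poly_exp_inv_def intro!: eventually_mono[OF eventually_at_left_real[of "-1" 0]])
  ultimately have "(poly_exp_inv p has_real_derivative 0) (at 0)"
    by (simp add: DERIV_def filterlim_split_at)
  then show ?thesis using equal by (simp add: poly_exp_inv_def)
next
  case less
  have "((\<lambda>x. 0) has_real_derivative poly_exp_inv ([:0,0,1:] * (p - pderiv p)) x) (at x)"
    using less by (auto simp: poly_exp_inv_def)
  then show ?thesis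
    by (rule has_field_derivative_transform_within_open[where S="{..<0}"])
       (use less in \<open>auto simp: poly_exp_inv_def\<close>)
next
  case greater
  have "((\<lambda>x. poly p (1/x) * exp (- (1/x))) has_real_derivative
      poly_exp_inv ([:0,0,1:] * (p - pderiv p)) x) (at x)"
    using greater
    by (auto intro!: derivative_eq_intros DERIV_chain2[OF poly_DERIV] simp: poly_exp_inv_def)
       (simp add: field_simps power2_eq_square)
  then show ?thesis
    by (rule has_field_derivative_transform_within_open[where S="{0<..}"])
       (use greater in \<open>auto simp: poly_exp_inv_def\<close>)
qed

lemma ntimes_differentiable_poly_exp_inv: "ntimes_differentiable n (poly_exp_inv p)"
  by (induction n arbitrary: p) (use poly_exp_inv_has_real_derivative in auto)

definition exp_inv :: "real \<Rightarrow> real" where "exp_inv = poly_exp_inv 1"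

lemma exp_inv_eq: "exp_inv x = (if x > 0 then exp (- (1/x)) else 0)"
  by (simp add: exp_inv_def poly_exp_inv_def)

lemma exp_inv_nonneg: "exp_inv x \<ge> 0"
  by (simp add: exp_inv_eq)

lemma exp_inv_pos: "x > 0 \<Longrightarrow> exp_inv x > 0"
  by (simp add: exp_inv_eq)

lemma exp_inv_mono: "x \<le> y \<Longrightarrow> exp_inv x \<le> exp_inv y"
proof (cases "x > 0")
  case True
  moreover assume "x \<le> y"
  ultimately have "1/y \<le> 1/x" by (simp add: frac_le)
  with \<open>x > 0\<close> \<open>x \<le> y\<close> show ?thesis by (simp add: exp_inv_eq)
qed (simp add: exp_inv_eq)

definition smooth_step :: "real \<Rightarrow> real" where
  "smooth_step t = exp_inv t / (exp_inv t + exp_inv (1 - t))"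

lemma smooth_step_denominator_pos: "exp_inv t + exp_inv (1 - t) > 0"
  using exp_inv_pos[of t] exp_inv_pos[of "1 - t"] exp_inv_nonneg[of t] exp_inv_nonneg[of "1 - t"]
  by (cases "t > 0") auto

lemma ntimes_differentiable_smooth_step: "ntimes_differentiable n smooth_step"
proof -
  have diff: "ntimes_differentiable n (\<lambda>t. exp_inv (c * t + d))" for c d
    unfolding exp_inv_def by (rule ntimes_differentiable_compose_affine[OF ntimes_differentiable_poly_exp_inv])
  have nz: "exp_inv (1 * t + 0) + exp_inv ((-1) * t + 1) \<noteq> 0" for t
    using smooth_step_denominator_pos[of t] by simp
  have "ntimes_differentiable n
      (\<lambda>t. exp_inv (1 * t + 0) * (1 / (exp_inv (1 * t + 0) + exp_inv ((-1) * t + 1))))"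
    by (intro ntimes_differentiable_mult ntimes_differentiable_divide ntimes_differentiable_add diff nz)
  then show ?thesis unfolding smooth_step_def by simp
qed

lemma smooth_step_eq_0: "t \<le> 0 \<Longrightarrow> smooth_step t = 0"
  by (simp add: smooth_step_def exp_inv_eq)

lemma smooth_step_eq_1: "t \<ge> 1 \<Longrightarrow> smooth_step t = 1"
  using smooth_step_denominator_pos[of t] by (simp add: smooth_step_def exp_inv_eq)

lemma smooth_step_nonneg: "smooth_step t \<ge> 0"
  using smooth_step_denominator_pos[of t] exp_inv_nonneg[of t] by (simp add: smooth_step_def)

lemma smooth_step_le_1: "smooth_step t \<le> 1"
  using smooth_step_denominator_pos[of t] exp_inv_nonneg[of "1 - t"]
  by (simp add: smooth_step_def divide_simps)

lemma smooth_step_mono: "t \<le> s \<Longrightarrow> smooth_step t \<le> smooth_step s"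
proof -
  assume "t \<le> s"
  then have "exp_inv t * exp_inv (1 - s) \<le> exp_inv s * exp_inv (1 - t)"
    by (intro mult_mono exp_inv_mono exp_inv_nonneg) auto
  then have "exp_inv t * (exp_inv s + exp_inv (1 - s)) \<le> exp_inv s * (exp_inv t + exp_inv (1 - t))"
    by (simp add: algebra_simps)
  then show ?thesis
    using smooth_step_denominator_pos[of t] smooth_step_denominator_pos[of s]
    unfolding smooth_step_def by (simp add: frac_le_eq divide_le_eq_1 le_divide_eq divide_le_eq)
qed

lemma smooth_step_has_real_derivative: "(smooth_step has_real_derivative deriv smooth_step t) (at t)"
proof -
  obtain f' where "\<forall>x. (smooth_step has_real_derivative f' x) (at x)"
    using ntimes_differentiable_smooth_step[of 1] by auto
  then show ?thesis using DERIV_imp_deriv by metis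
qed

lemma isCont_deriv_smooth_step: "isCont (deriv smooth_step) t"
proof -
  obtain f' where d: "\<forall>x. (smooth_step has_real_derivative f' x) (at x)" "ntimes_differentiable 1 f'"
    using ntimes_differentiable_smooth_step[of 2] by (auto simp: numeral_2_eq_2)
  then have "deriv smooth_step = f'" by (auto intro!: DERIV_imp_deriv)
  then show ?thesis using d(2) by (auto intro: DERIV_isCont)
qed

lemma deriv_smooth_step_nonneg: "deriv smooth_step t \<ge> 0"
proof -
  have "((\<lambda>h. (smooth_step (t + h) - smooth_step t) / h) \<longlongrightarrow> deriv smooth_step t) (at_right 0)"
    using smooth_step_has_real_derivative[of t] by (simp add: DERIV_def filterlim_at_split)
  moreover have "\<forall>\<^sub>F h in at_right 0. 0 \<le> (smooth_step (t + h) - smooth_step t) / h"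
    by (intro eventually_mono[OF eventually_at_right_less[of 0]])
       (auto intro!: divide_nonneg_pos smooth_step_mono)
  ultimately show ?thesis by (intro tendsto_lowerbound) auto
qed

lemma deriv_smooth_step_eq_0: "t \<le> 0 \<or> t \<ge> 1 \<Longrightarrow> deriv smooth_step t = 0"
proof (elim disjE)
  assume "t \<le> 0"
  then show ?thesis
    by (intro DERIV_local_min[OF smooth_step_has_real_derivative, of 1])
       (auto simp: smooth_step_eq_0 smooth_step_nonneg)
next
  assume "t \<ge> 1"
  then show ?thesis
    by (intro DERIV_local_max[OF smooth_step_has_real_derivative, of 1])
       (auto simp: smooth_step_eq_1 smooth_step_le_1)
qed

definition plateau :: "real \<Rightarrow> real \<Rightarrow> real \<Rightarrow> real \<Rightarrow> real" where
  "plateau x y e t = smooth_step ((t - x) / e) * smooth_step ((y - t) / e)"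

lemma plateau_eq_0: "e > 0 \<Longrightarrow> t \<le> x \<or> t \<ge> y \<Longrightarrow> plateau x y e t = 0"
  by (auto simp: plateau_def smooth_step_eq_0 divide_nonpos_pos)

lemma plateau_eq_1: "e > 0 \<Longrightarrow> x + e \<le> t \<Longrightarrow> t \<le> y - e \<Longrightarrow> plateau x y e t = 1"
  by (auto simp: plateau_def smooth_step_eq_1)

lemma plateau_nonneg: "0 \<le> plateau x y e t"
  by (simp add: plateau_def smooth_step_nonneg)

lemma plateau_le_1: "plateau x y e t \<le> 1"
  by (simp add: plateau_def smooth_step_nonneg smooth_step_le_1 mult_le_one)

lemma plateau_has_real_derivative:
  assumes "e > 0"
  shows "(plateau x y e has_real_derivative
     deriv smooth_step ((t - x) / e) / e * smooth_step ((y - t) / e)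
     - smooth_step ((t - x) / e) * deriv smooth_step ((y - t) / e) / e) (at t)"
proof -
  have "((\<lambda>t. smooth_step ((t - x) / e)) has_real_derivative deriv smooth_step ((t - x) / e) * (1 / e)) (at t)"
    by (rule DERIV_chain2[OF smooth_step_has_real_derivative]) (use assms in \<open>auto intro!: derivative_eq_intros\<close>)
  moreover have "((\<lambda>t. smooth_step ((y - t) / e)) has_real_derivative deriv smooth_step ((y - t) / e) * (- 1 / e)) (at t)"
    by (rule DERIV_chain2[OF smooth_step_has_real_derivative]) (use assms in \<open>auto intro!: derivative_eq_intros\<close>)
  ultimately show ?thesis
    unfolding plateau_def by (rule DERIV_mult[THEN DERIV_cong]) (simp add: algebra_simps)
qed

lemma deriv_plateau:
  "e > 0 \<Longrightarrow> deriv (plateau x y e) t =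
     deriv smooth_step ((t - x) / e) / e * smooth_step ((y - t) / e)
     - smooth_step ((t - x) / e) * deriv smooth_step ((y - t) / e) / e"
  using plateau_has_real_derivative DERIV_imp_deriv by blast

lemma deriv_plateau_eq_0: "e > 0 \<Longrightarrow> t \<notin> {x..y} \<Longrightarrow> deriv (plateau x y e) t = 0"
  by (auto simp: deriv_plateau smooth_step_eq_0 deriv_smooth_step_eq_0 divide_nonpos_pos)

lemma continuous_on_compose_smooth_step [continuous_intros]:
  "continuous_on A f \<Longrightarrow> continuous_on A (\<lambda>t. smooth_step (f t))"
  "continuous_on A f \<Longrightarrow> continuous_on A (\<lambda>t. deriv smooth_step (f t))"
  using continuous_on_compose2[OF continuous_at_imp_continuous_on[of UNIV]]
    DERIV_isCont[OF smooth_step_has_real_derivative] isCont_deriv_smooth_step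
  by blast+

lemma continuous_on_plateau: "e > 0 \<Longrightarrow> continuous_on A (plateau x y e)"
  unfolding plateau_def by (intro continuous_intros) auto

lemma continuous_on_deriv_plateau: "e > 0 \<Longrightarrow> continuous_on A (deriv (plateau x y e))"
proof -
  assume e: "e > 0"
  then have "continuous_on A (\<lambda>t. deriv smooth_step ((t - x) / e) / e * smooth_step ((y - t) / e)
     - smooth_step ((t - x) / e) * deriv smooth_step ((y - t) / e) / e)"
    by (intro continuous_intros) auto
  moreover have "deriv (plateau x y e) = (\<lambda>t. deriv smooth_step ((t - x) / e) / e * smooth_step ((y - t) / e)
     - smooth_step ((t - x) / e) * deriv smooth_step ((y - t) / e) / e)"
    using deriv_plateau[OF e] by blast
  ultimately show ?thesis by simp
qed

lemma plateau_measurable: "e > 0 \<Longrightarrow> plateau x y e \<in> borel_measurable lebesgue"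
  by (simp add: measurable_completion borel_measurable_continuous_onI continuous_on_plateau)

lemma test_fun_plateau: "0 < x \<Longrightarrow> x < y \<Longrightarrow> y < L \<Longrightarrow> e > 0 \<Longrightarrow> test_fun L (plateau x y e)"
proof -
  assume xy: "0 < x" "x < y" "y < L" and e: "e > 0"
  have "ntimes_differentiable n (plateau x y e)" for n
  proof -
    have "ntimes_differentiable n (\<lambda>t. smooth_step ((1/e) * t + (- x / e)) * smooth_step ((-1/e) * t + y / e))"
      by (intro ntimes_differentiable_mult ntimes_differentiable_compose_affine ntimes_differentiable_smooth_step)
    moreover have "(\<lambda>t. smooth_step ((1/e) * t + (- x / e)) * smooth_step ((-1/e) * t + y / e)) = plateau x y e"
      using e by (auto simp: plateau_def diff_divide_distrib)
    ultimately show ?thesis by simp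
  qed
  then obtain D where "D 0 = plateau x y e" "\<forall>n t. (D n has_real_derivative D (Suc n) t) (at t)"
    using ntimes_differentiable_all_imp_derivative_chain by blast
  moreover have "\<forall>t. t \<notin> {x..y} \<longrightarrow> plateau x y e t = 0"
    using plateau_eq_0[OF e] by auto
  ultimately show ?thesis
    unfolding test_fun_def using xy by (intro conjI exI[of _ D] exI[of _ x] exI[of _ y]) auto
qed

lemma obtain_positive_null_sequence:
  fixes r :: real
  assumes "r > 0"
  obtains e :: "nat \<Rightarrow> real" where "\<And>n. 0 < e n" "\<And>n. e n \<le> r" "e \<longlonglongrightarrow> 0"
proof (rule that[of "\<lambda>n. r / real (Suc n)"])
  show "0 < r / real (Suc n)" "r / real (Suc n) \<le> r" for n
    using assms by (auto simp: field_simps)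
  show "(\<lambda>n. r / real (Suc n)) \<longlonglongrightarrow> 0"
    using tendsto_mult_right_zero[OF LIMSEQ_Suc[OF lim_inverse_n'], of r] by simp
qed

lemma plateau_tendsto_indicator:
  assumes e: "\<And>n. 0 < e n" "e \<longlonglongrightarrow> 0" and d: "\<And>n. 0 \<le> d n" "d \<longlonglongrightarrow> 0"
  shows "(\<lambda>n. plateau (x + d n) (y - d n) (e n) t) \<longlonglongrightarrow> indicator {x<..<y} t"
proof (cases "t \<in> {x<..<y}")
  case True
  have "(\<lambda>n. d n + e n) \<longlonglongrightarrow> 0" using tendsto_add[OF d(2) e(2)] by simp
  then have "\<forall>\<^sub>F n in sequentially. d n + e n < min (t - x) (y - t)"
    using True by (intro order_tendstoD(2)) auto
  then have "\<forall>\<^sub>F n in sequentially. plateau (x + d n) (y - d n) (e n) t = indicator {x<..<y} t"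
    by eventually_elim (use True e(1) in \<open>auto intro: plateau_eq_1\<close>)
  then show ?thesis by (rule tendsto_eventually)
next
  case False
  then have "plateau (x + d n) (y - d n) (e n) t = 0" for n
    using d(1)[of n] by (intro plateau_eq_0 e) auto
  then show ?thesis using False by simp
qed

lemma set_integral_plateau_tendsto:
  fixes G :: "real \<Rightarrow> real"
  assumes G: "set_integrable lebesgue A G"
    and e: "\<And>n. 0 < e n" "e \<longlonglongrightarrow> 0" and d: "\<And>n. 0 \<le> d n" "d \<longlonglongrightarrow> 0"
  shows "(\<lambda>n. LINT t:A|lebesgue. G t * plateau (x + d n) (y - d n) (e n) t)
           \<longlonglongrightarrow> (LINT t:A \<inter> {x<..<y}|lebesgue. G t)"
proof -
  let ?G = "\<lambda>t. indicator A t * G t"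
  have Gi: "integrable lebesgue ?G" using G by (simp add: set_integrable_def)
  have "(\<lambda>n. LINT t|lebesgue. plateau (x + d n) (y - d n) (e n) t * ?G t)
          \<longlonglongrightarrow> (LINT t|lebesgue. indicator {x<..<y} t * ?G t)"
  proof (rule integral_dominated_convergence[where w="\<lambda>t. norm (?G t)"])
    show "(\<lambda>t. indicator {x<..<y} t * ?G t) \<in> borel_measurable lebesgue"
      by (rule borel_measurable_times[OF borel_measurable_indicator borel_measurable_integrable[OF Gi]]) simp
    show "(\<lambda>t. plateau (x + d n) (y - d n) (e n) t * ?G t) \<in> borel_measurable lebesgue" for n
      by (rule borel_measurable_times[OF plateau_measurable[OF e(1)] borel_measurable_integrable[OF Gi]])
    show "AE t in lebesgue. norm (plateau (x + d n) (y - d n) (e n) t * ?G t) \<le> norm (?G t)" for n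
      using plateau_nonneg plateau_le_1 by (auto simp: abs_mult intro!: mult_left_le_one_le)
    show "AE t in lebesgue. (\<lambda>n. plateau (x + d n) (y - d n) (e n) t * ?G t)
            \<longlonglongrightarrow> indicator {x<..<y} t * ?G t"
      by (intro AE_I2 tendsto_mult_right plateau_tendsto_indicator e d)
  qed (use Gi in auto)
  then show ?thesis
    unfolding set_lebesgue_integral_def by (simp add: indicator_inter_arith ac_simps)
qed

section \<open>The fundamental lemma of the calculus of variations\<close>

lemma set_integral_Ioi_eq_0_if_orthogonal_to_plateaus:
  fixes F :: "real \<Rightarrow> real"
  assumes L: "0 < L" and F: "set_integrable lebesgue {0<..<L} F"
    and zero: "\<And>x y e. 0 < x \<Longrightarrow> x < y \<Longrightarrow> y < L \<Longrightarrow> e > 0 \<Longrightarrow>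
        (LINT t:{0<..<L}|lebesgue. F t * plateau x y e t) = 0"
  shows "(LINT t:{0<..<L} \<inter> {c<..}|lebesgue. F t) = 0"
proof (cases "c < L")
  case True
  \<comment> \<open>plateaus must be supported strictly inside (0, L), hence the shifted endpoints\<close>
  define c' where "c' = max c 0"
  have c': "0 \<le> c'" "c' < L" using True L by (auto simp: c'_def)
  obtain e where e: "\<And>n. 0 < e n" "\<And>n. e n \<le> (L - c') / 4" "e \<longlonglongrightarrow> 0"
    using obtain_positive_null_sequence[of "(L - c') / 4"] c' by auto
  have "(\<lambda>n. LINT t:{0<..<L}|lebesgue. F t * plateau (c' + e n) (L - e n) (e n) t)
          \<longlonglongrightarrow> (LINT t:{0<..<L} \<inter> {c'<..<L}|lebesgue. F t)"
    using e by (intro set_integral_plateau_tendsto F) (auto intro: less_imp_le)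
  moreover have "(LINT t:{0<..<L}|lebesgue. F t * plateau (c' + e n) (L - e n) (e n) t) = 0" for n
    using e(1,2)[of n] c' by (intro zero) auto
  ultimately have "(\<lambda>n. 0) \<longlonglongrightarrow> (LINT t:{0<..<L} \<inter> {c'<..<L}|lebesgue. F t)"
    by simp
  moreover have "{0<..<L} \<inter> {c'<..<L} = {0<..<L} \<inter> {c<..}"
    by (auto simp: c'_def)
  ultimately show ?thesis by (simp add: LIMSEQ_const_iff)
next
  case False
  then have "{0<..<L} \<inter> {c<..} = {}" by auto
  then show ?thesis by (simp add: set_lebesgue_integral_def)
qed

lemma sigma_sets_Ioi_eq_borel: "sigma_sets UNIV (range greaterThan) = sets (borel::real measure)"
  by (simp add: borel_Ioi)

lemma integral_indicator_borel_eq_0: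
  fixes G :: "real \<Rightarrow> real"
  assumes G: "integrable lebesgue G"
    and Ioi: "\<And>c. (LINT t|lebesgue. indicator {c<..} t * G t) = 0"
    and UNIV: "(LINT t|lebesgue. G t) = 0"
    and A: "A \<in> sets borel"
  shows "(LINT t|lebesgue. indicator A t * G t) = 0"
proof -
  have "{a<..} \<inter> {b<..} = {max a b<..}" for a b :: real
    by auto
  then have "Int_stable (range greaterThan :: real set set)"
    unfolding Int_stable_def by auto
  moreover have "range greaterThan \<subseteq> Pow (UNIV :: real set)"
    by simp
  moreover have "A \<in> sigma_sets UNIV (range greaterThan)"
    using A sigma_sets_Ioi_eq_borel by simp
  ultimately show ?thesis
  proof (induct rule: sigma_sets_induct_disjoint)
    case (basic A) then show ?case using Ioi by auto
  next
    case empty then show ?case by simp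
  next
    case (compl A)
    then have "A \<in> sets lebesgue"
      by (simp add: sigma_sets_Ioi_eq_borel sets_completionI_sets)
    have "(LINT t|lebesgue. indicator (UNIV - A) t * G t) = (LINT t|lebesgue. G t - indicator A t * G t)"
      by (intro Bochner_Integration.integral_cong) (auto simp: indicator_def)
    also have "\<dots> = (LINT t|lebesgue. G t) - (LINT t|lebesgue. indicator A t * G t)"
      using integrable_mult_indicator[OF \<open>A \<in> sets lebesgue\<close> G] G
      by (intro Bochner_Integration.integral_diff) auto
    finally show ?case using compl(2) UNIV by simp
  next
    case (union A)
    have A: "A i \<in> sets lebesgue" for i
      using union(2) by (simp add: sigma_sets_Ioi_eq_borel sets_completionI_sets subset_eq)
    have "(LINT x:(\<Union>i. A i)|lebesgue. G x) = (\<Sum>i. (LINT x:(A i)|lebesgue. G x))"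
    proof (rule lebesgue_integral_countable_add)
      show "A i \<inter> A j = {}" if "i \<noteq> j" for i j
        using union(1) that by (auto simp: disjoint_family_on_def)
      show "set_integrable lebesgue (\<Union>i. A i) G"
        using A G unfolding set_integrable_def by (intro integrable_mult_indicator) auto
    qed (rule A)
    then show ?case using union(3) by (simp add: set_lebesgue_integral_def)
  qed
qed

lemma AE_eq_0_if_integral_Ioi_eq_0:
  fixes G :: "real \<Rightarrow> real"
  assumes G: "integrable lebesgue G"
    and Ioi: "\<And>c. (LINT t|lebesgue. indicator {c<..} t * G t) = 0"
    and UNIV: "(LINT t|lebesgue. G t) = 0"
  shows "AE t in lebesgue. G t = 0"
proof (rule density_unique_real[OF G integrable_zero])
  fix A :: "real set"
  assume "A \<in> sets lebesgue"
  then obtain B N N' where BN: "A = B \<union> N" "N \<subseteq> N'" "N' \<in> null_sets lborel" "B \<in> sets lborel"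
    by (rule sets_completionE)
  have "AE t in lebesgue. t \<notin> N'"
    using BN(3) by (intro AE_not_in null_sets_completionI)
  then have "AE t in lebesgue. indicator A t * G t = indicator B t * G t"
    by eventually_elim (use BN(1,2) in \<open>auto simp: indicator_def\<close>)
  then have "(LINT t|lebesgue. indicator A t * G t) = (LINT t|lebesgue. indicator B t * G t)"
    using \<open>A \<in> sets lebesgue\<close> BN(4) G
    by (intro integral_cong_AE)
       (auto intro!: borel_measurable_times borel_measurable_indicator sets_completionI_sets)
  also have "\<dots> = 0"
    using BN(4) by (intro integral_indicator_borel_eq_0[OF G Ioi UNIV]) (simp add: sets_lborel)
  finally show "set_lebesgue_integral lebesgue A G = set_lebesgue_integral lebesgue A (\<lambda>x. 0)"
    by (simp add: set_lebesgue_integral_def)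
qed

lemma AE_eq_0_if_orthogonal_to_plateaus:
  fixes F :: "real \<Rightarrow> real"
  assumes L: "0 < L" and F: "set_integrable lebesgue {0<..<L} F"
    and zero: "\<And>x y e. 0 < x \<Longrightarrow> x < y \<Longrightarrow> y < L \<Longrightarrow> e > 0 \<Longrightarrow>
        (LINT t:{0<..<L}|lebesgue. F t * plateau x y e t) = 0"
  shows "AE t in lebesgue. t \<in> {0<..<L} \<longrightarrow> F t = 0"
proof -
  define G where "G t = indicator {0<..<L} t * F t" for t
  have G: "integrable lebesgue G"
    using F by (simp add: set_integrable_def G_def[abs_def])
  have Ioi: "(LINT t|lebesgue. indicator {c<..} t * G t) = 0" for c
    using set_integral_Ioi_eq_0_if_orthogonal_to_plateaus[OF L F zero, of c]
    by (simp add: set_lebesgue_integral_def G_def indicator_inter_arith ac_simps)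
  have "(LINT t|lebesgue. G t) = (LINT t|lebesgue. indicator {0<..} t * G t)"
    by (intro Bochner_Integration.integral_cong) (auto simp: G_def indicator_def)
  then have "AE t in lebesgue. G t = 0"
    using Ioi by (intro AE_eq_0_if_integral_Ioi_eq_0[OF G Ioi]) simp
  then show ?thesis by eventually_elim (auto simp: G_def)
qed

lemma set_integrable_mult_bounded:
  fixes F k :: "real \<Rightarrow> real"
  assumes F: "set_integrable lebesgue A F" and k: "set_borel_measurable lebesgue A k"
    and bound: "AE t in lebesgue. t \<in> A \<longrightarrow> \<bar>k t\<bar> \<le> B"
  shows "set_integrable lebesgue A (\<lambda>t. k t * F t)"
proof (rule set_integrable_bound[OF set_integrable_mult_right[OF F, of B]])
  have "(\<lambda>t. (indicator A t *\<^sub>R k t) * (indicator A t *\<^sub>R F t)) \<in> borel_measurable lebesgue"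
    using k F by (intro borel_measurable_times) (auto simp: set_borel_measurable_def set_integrable_def)
  moreover have "(\<lambda>t. (indicator A t *\<^sub>R k t) * (indicator A t *\<^sub>R F t))
      = (\<lambda>t. indicator A t *\<^sub>R (k t * F t))"
    by (auto simp: indicator_def)
  ultimately show "set_borel_measurable lebesgue A (\<lambda>t. k t * F t)"
    unfolding set_borel_measurable_def by simp
  show "AE t\<in>A in lebesgue. norm (k t * F t) \<le> norm (B * F t)"
    using bound by eventually_elim (auto simp: abs_mult intro: mult_right_mono order.trans[OF _ abs_ge_self])
qed

lemma set_integrable_mult_plateau:
  fixes F :: "real \<Rightarrow> real"
  assumes "set_integrable lebesgue A F" "A \<in> sets lebesgue" "e > 0"
  shows "set_integrable lebesgue A (\<lambda>t. F t * plateau x y e t)"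
proof -
  have "set_borel_measurable lebesgue A (plateau x y e)"
    unfolding set_borel_measurable_def using assms(2,3)
    by (intro borel_measurable_scaleR borel_measurable_indicator plateau_measurable)
  then show ?thesis
    using set_integrable_mult_bounded[OF assms(1), of "plateau x y e" 1] plateau_nonneg plateau_le_1
    by (simp add: mult.commute abs_le_iff)
qed

lemma L2_on_imp_set_integrable:
  assumes "L2_on L f"
  shows "set_integrable lebesgue {0<..<L} f"
proof (rule set_integrable_bound)
  have "set_integrable lebesgue {0<..<L} (\<lambda>x. 1 :: real)"
    unfolding set_integrable_def using lmeasurable_interval(2)[of 0 L]
    by (auto intro!: integrable_real_indicator simp: fmeasurable_def)
  then show "set_integrable lebesgue {0<..<L} (\<lambda>x. 1 + (f x)\<^sup>2)"
    using assms by (intro set_integral_add) (auto simp: L2_on_def)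
  show "set_borel_measurable lebesgue {0<..<L} f"
    using assms by (simp add: L2_on_def)
  have "\<bar>z\<bar> \<le> 1 + z\<^sup>2" for z :: real
  proof (cases "\<bar>z\<bar> \<le> 1")
    case False
    then have "\<bar>z\<bar> * 1 \<le> \<bar>z\<bar> * \<bar>z\<bar>" by (intro mult_left_mono) auto
    then show ?thesis by (simp add: power2_eq_square abs_mult_self_eq)
  qed (simp add: add_increasing2)
  then show "AE x\<in>{0<..<L} in lebesgue. norm (f x) \<le> norm (1 + (f x)\<^sup>2)"
    by (intro AE_I2) auto
qed

lemma AE_eq_if_equal_on_test_funs:
  fixes F H :: "real \<Rightarrow> real"
  assumes L: "0 < L"
    and F: "set_integrable lebesgue {0<..<L} F" and H: "set_integrable lebesgue {0<..<L} H"
    and eq: "\<And>\<psi>. test_fun L \<psi> \<Longrightarrow>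
      (LINT t:{0<..<L}|lebesgue. F t * \<psi> t) = (LINT t:{0<..<L}|lebesgue. H t * \<psi> t)"
  shows "AE t in lebesgue. t \<in> {0<..<L} \<longrightarrow> F t = H t"
proof -
  have "AE t in lebesgue. t \<in> {0<..<L} \<longrightarrow> F t - H t = 0"
  proof (rule AE_eq_0_if_orthogonal_to_plateaus[OF L set_integral_diff(1)[OF F H]])
    fix x y e :: real
    assume xye: "0 < x" "x < y" "y < L" "e > 0"
    have "(LINT t:{0<..<L}|lebesgue. (F t - H t) * plateau x y e t)
        = (LINT t:{0<..<L}|lebesgue. F t * plateau x y e t) - (LINT t:{0<..<L}|lebesgue. H t * plateau x y e t)"
      unfolding left_diff_distrib using xye(4)
      by (intro set_integral_diff set_integrable_mult_plateau F H) auto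
    then show "(LINT t:{0<..<L}|lebesgue. (F t - H t) * plateau x y e t) = 0"
      using eq[OF test_fun_plateau[OF xye]] by simp
  qed
  then show ?thesis by eventually_elim auto
qed

section \<open>Weak derivatives of continuous functions\<close>

lemma has_integral_deriv_smooth_step_left:
  assumes "e > 0"
  shows "((\<lambda>t. deriv smooth_step ((t - x) / e) / e) has_integral 1) {x..x + e}"
proof -
  have "((\<lambda>t. smooth_step ((t - x) / e)) has_real_derivative deriv smooth_step ((t - x) / e) * (1 / e)) (at t)" for t
    by (rule DERIV_chain2[OF smooth_step_has_real_derivative]) (use assms in \<open>auto intro!: derivative_eq_intros\<close>)
  then have "((\<lambda>t. deriv smooth_step ((t - x) / e) / e) has_integral
      smooth_step ((x + e - x) / e) - smooth_step ((x - x) / e)) {x..x + e}"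
    using assms by (intro fundamental_theorem_of_calculus)
      (auto simp: has_real_derivative_iff_has_vector_derivative[symmetric] intro: has_field_derivative_at_within)
  then show ?thesis using assms by (simp add: smooth_step_eq_0 smooth_step_eq_1)
qed

lemma has_integral_deriv_smooth_step_right:
  assumes "e > 0"
  shows "((\<lambda>t. deriv smooth_step ((y - t) / e) / e) has_integral 1) {y - e..y}"
proof -
  have "((\<lambda>t. smooth_step ((y - t) / e)) has_real_derivative deriv smooth_step ((y - t) / e) * (- 1 / e)) (at t)" for t
    by (rule DERIV_chain2[OF smooth_step_has_real_derivative]) (use assms in \<open>auto intro!: derivative_eq_intros\<close>)
  then have "((\<lambda>t. - smooth_step ((y - t) / e)) has_real_derivative deriv smooth_step ((y - t) / e) * (1 / e)) (at t)" for t
    using DERIV_minus by fastforce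
  then have "((\<lambda>t. deriv smooth_step ((y - t) / e) / e) has_integral
      (- smooth_step ((y - y) / e)) - (- smooth_step ((y - (y - e)) / e))) {y - e..y}"
    using assms by (intro fundamental_theorem_of_calculus)
      (auto simp: has_real_derivative_iff_has_vector_derivative[symmetric] intro: has_field_derivative_at_within)
  then show ?thesis using assms by (simp add: smooth_step_eq_0 smooth_step_eq_1)
qed

lemma abs_integral_mult_kernel_minus_le:
  fixes v k :: "real \<Rightarrow> real"
  assumes v: "continuous_on {a..b} v"
    and k: "continuous_on {a..b} k" "\<And>t. t \<in> {a..b} \<Longrightarrow> k t \<ge> 0" "(k has_integral 1) {a..b}"
    and r: "\<And>t. t \<in> {a..b} \<Longrightarrow> \<bar>v t - v c\<bar> \<le> r"
  shows "\<bar>integral {a..b} (\<lambda>t. v t * k t) - v c\<bar> \<le> r"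
proof -
  have "integral {a..b} (\<lambda>t. v t * k t) - v c
      = integral {a..b} (\<lambda>t. v t * k t) - integral {a..b} (\<lambda>t. v c * k t)"
    using k(3) by (simp add: integral_unique)
  also have "\<dots> = integral {a..b} (\<lambda>t. (v t - v c) * k t)"
    using v k(1) by (subst integral_diff[symmetric])
      (auto intro!: integrable_continuous_interval continuous_intros simp: algebra_simps)
  finally have "\<bar>integral {a..b} (\<lambda>t. v t * k t) - v c\<bar> = norm (integral {a..b} (\<lambda>t. (v t - v c) * k t))"
    by simp
  also have "\<dots> \<le> integral {a..b} (\<lambda>t. r * k t)"
    using v k(1) r k(2)
    by (intro integral_norm_bound_integral)
      (auto intro!: integrable_continuous_interval continuous_intros simp: abs_mult intro: mult_right_mono)
  also have "\<dots> = r"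
    using k(3) by (simp add: integral_unique)
  finally show ?thesis .
qed

lemma integral_mult_kernel_tendsto:
  fixes v :: "real \<Rightarrow> real" and k :: "nat \<Rightarrow> real \<Rightarrow> real"
  assumes v: "continuous_on S v" "c \<in> S"
    and I: "\<And>n. {l n..u n} \<subseteq> S" "\<And>n. c \<in> {l n..u n}" "(\<lambda>n. u n - l n) \<longlonglongrightarrow> 0"
    and k: "\<And>n. continuous_on {l n..u n} (k n)" "\<And>n t. t \<in> {l n..u n} \<Longrightarrow> k n t \<ge> 0"
      "\<And>n. (k n has_integral 1) {l n..u n}"
  shows "(\<lambda>n. integral {l n..u n} (\<lambda>t. v t * k n t)) \<longlonglongrightarrow> v c"
proof (rule tendstoI)
  fix r :: real
  assume "r > 0"
  then obtain \<delta> where \<delta>: "\<delta> > 0" "\<And>t. t \<in> S \<Longrightarrow> dist t c < \<delta> \<Longrightarrow> dist (v t) (v c) < r / 2"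
    using v unfolding continuous_on_iff by (metis half_gt_zero)
  have "\<forall>\<^sub>F n in sequentially. u n - l n < \<delta>"
    using I(3) \<delta>(1) by (intro order_tendstoD(2)) auto
  then show "\<forall>\<^sub>F n in sequentially. dist (integral {l n..u n} (\<lambda>t. v t * k n t)) (v c) < r"
  proof eventually_elim
    case (elim n)
    have "\<bar>integral {l n..u n} (\<lambda>t. v t * k n t) - v c\<bar> \<le> r / 2"
    proof (rule abs_integral_mult_kernel_minus_le[OF continuous_on_subset[OF v(1) I(1)] k])
      fix t
      assume "t \<in> {l n..u n}"
      then show "\<bar>v t - v c\<bar> \<le> r / 2"
        using I(1,2)[of n] elim \<delta>(2)[of t] by (force simp: dist_real_def)
    qed
    then show ?case using \<open>r > 0\<close> by (simp add: dist_real_def)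
  qed
qed

lemma has_integral_mult_deriv_plateau:
  fixes v :: "real \<Rightarrow> real"
  assumes v: "continuous_on {x..y} v" and e: "e > 0" "2 * e \<le> y - x"
  shows "((\<lambda>t. v t * deriv (plateau x y e) t) has_integral
     integral {x..x + e} (\<lambda>t. v t * (deriv smooth_step ((t - x) / e) / e))
     - integral {y - e..y} (\<lambda>t. v t * (deriv smooth_step ((y - t) / e) / e))) {x..y}"
proof -
  let ?k1 = "\<lambda>t. deriv smooth_step ((t - x) / e) / e"
  let ?k2 = "\<lambda>t. deriv smooth_step ((y - t) / e) / e"
  have "((\<lambda>t. v t * ?k1 t) has_integral integral {x..x + e} (\<lambda>t. v t * ?k1 t)) {x..x + e}"
    using e by (intro integrable_integral integrable_continuous_interval continuous_intros
        continuous_on_subset[OF v]) auto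
  then have left: "((\<lambda>t. v t * deriv (plateau x y e) t) has_integral
      integral {x..x + e} (\<lambda>t. v t * ?k1 t)) {x..x + e}"
  proof (rule has_integral_eq[rotated])
    fix t
    assume "t \<in> {x..x + e}"
    then have "(y - t) / e \<ge> 1" using e by (auto simp: field_simps)
    then show "v t * ?k1 t = v t * deriv (plateau x y e) t"
      using e by (simp add: deriv_plateau smooth_step_eq_1 deriv_smooth_step_eq_0)
  qed
  have middle: "((\<lambda>t. v t * deriv (plateau x y e) t) has_integral 0) {x + e..y - e}"
  proof (rule has_integral_eq[rotated, OF has_integral_0])
    fix t
    assume "t \<in> {x + e..y - e}"
    then have "(t - x) / e \<ge> 1" "(y - t) / e \<ge> 1" using e by (auto simp: field_simps)
    then show "0 = v t * deriv (plateau x y e) t"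
      using e by (simp add: deriv_plateau smooth_step_eq_1 deriv_smooth_step_eq_0)
  qed
  have "((\<lambda>t. - (v t * ?k2 t)) has_integral - integral {y - e..y} (\<lambda>t. v t * ?k2 t)) {y - e..y}"
    using e by (intro has_integral_neg integrable_integral integrable_continuous_interval continuous_intros
        continuous_on_subset[OF v]) auto
  then have right: "((\<lambda>t. v t * deriv (plateau x y e) t) has_integral
      - integral {y - e..y} (\<lambda>t. v t * ?k2 t)) {y - e..y}"
  proof (rule has_integral_eq[rotated])
    fix t
    assume "t \<in> {y - e..y}"
    then have "(t - x) / e \<ge> 1" using e by (auto simp: field_simps)
    then show "- (v t * ?k2 t) = v t * deriv (plateau x y e) t"
      using e by (simp add: deriv_plateau smooth_step_eq_1 deriv_smooth_step_eq_0)
  qed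
  have "((\<lambda>t. v t * deriv (plateau x y e) t) has_integral
      integral {x..x + e} (\<lambda>t. v t * ?k1 t) + 0) {x..y - e}"
    using e by (intro has_integral_combine[OF _ _ left middle]) auto
  from has_integral_combine[OF _ _ this right] e show ?thesis by simp
qed

lemma integral_mult_deriv_plateau_tendsto:
  fixes v :: "real \<Rightarrow> real"
  assumes v: "continuous_on {x..y} v" and e: "\<And>n. 0 < e n" "\<And>n. 2 * e n \<le> y - x" "e \<longlonglongrightarrow> 0"
  shows "(\<lambda>n. integral {x..y} (\<lambda>t. v t * deriv (plateau x y (e n)) t)) \<longlonglongrightarrow> v x - v y"
proof -
  have le: "0 \<le> e n" "x + e n \<le> y" "y - e n \<ge> x" "x \<le> y" for n
    using e(1,2)[of n] by auto
  have "(\<lambda>n. integral {x..x + e n} (\<lambda>t. v t * (deriv smooth_step ((t - x) / e n) / e n))) \<longlonglongrightarrow> v x"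
    using e by (intro integral_mult_kernel_tendsto[OF v] has_integral_deriv_smooth_step_left
        divide_nonneg_pos deriv_smooth_step_nonneg continuous_intros) (use le in \<open>auto simp: less_imp_neq[symmetric]\<close>)
  moreover have "(\<lambda>n. integral {y - e n..y} (\<lambda>t. v t * (deriv smooth_step ((y - t) / e n) / e n))) \<longlonglongrightarrow> v y"
    using e by (intro integral_mult_kernel_tendsto[OF v] has_integral_deriv_smooth_step_right
        divide_nonneg_pos deriv_smooth_step_nonneg continuous_intros) (use le in \<open>auto simp: less_imp_neq[symmetric]\<close>)
  ultimately show ?thesis
    using e by (simp add: integral_unique[OF has_integral_mult_deriv_plateau[OF v]] tendsto_diff)
qed

lemma weak_deriv_integral_form:
  fixes v g :: "real \<Rightarrow> real"
  assumes v: "continuous_on {0..L} v" and g: "set_integrable lebesgue {0<..<L} g"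
    and wd: "\<And>\<psi>. test_fun L \<psi> \<Longrightarrow>
       (LINT t:{0<..<L}|lebesgue. v t * deriv \<psi> t) = - (LINT t:{0<..<L}|lebesgue. g t * \<psi> t)"
    and xy: "0 < x" "x < y" "y < L"
  shows "v y - v x = (LINT t:{x<..<y}|lebesgue. g t)"
proof -
  obtain e where e: "\<And>n. 0 < e n" "\<And>n. e n \<le> (y - x) / 2" "e \<longlonglongrightarrow> 0"
    using obtain_positive_null_sequence[of "(y - x) / 2"] xy by auto
  have vxy: "continuous_on {x..y} v"
    using xy by (intro continuous_on_subset[OF v]) auto
  have "(LINT t:{0<..<L}|lebesgue. v t * deriv (plateau x y (e n)) t)
      = integral {x..y} (\<lambda>t. v t * deriv (plateau x y (e n)) t)" for n
  proof -
    have "(LINT t:{0<..<L}|lebesgue. v t * deriv (plateau x y (e n)) t)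
        = (LINT t:{x..y}|lebesgue. v t * deriv (plateau x y (e n)) t)"
      unfolding set_lebesgue_integral_def using xy deriv_plateau_eq_0[OF e(1)]
      by (intro Bochner_Integration.integral_cong) (auto simp: indicator_def)
    also have "\<dots> = integral {x..y} (\<lambda>t. v t * deriv (plateau x y (e n)) t)"
      using e(1) by (intro set_lebesgue_integral_eq_integral(2) absolutely_integrable_continuous_real
          continuous_intros vxy continuous_on_deriv_plateau)
    finally show ?thesis .
  qed
  then have lhs: "(\<lambda>n. - (LINT t:{0<..<L}|lebesgue. g t * plateau x y (e n) t)) \<longlonglongrightarrow> v x - v y"
    using integral_mult_deriv_plateau_tendsto[OF vxy e(1)] e(2,3) wd test_fun_plateau[OF xy e(1)]
    by (simp add: field_simps)
  have "(\<lambda>n. LINT t:{0<..<L}|lebesgue. g t * plateau x y (e n) t)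
      \<longlonglongrightarrow> (LINT t:{0<..<L} \<inter> {x<..<y}|lebesgue. g t)"
    using set_integral_plateau_tendsto[OF g e(1,3), of "\<lambda>n. 0" x y] by simp
  from LIMSEQ_unique[OF lhs tendsto_minus[OF this]]
  have "v x - v y = - (LINT t:{0<..<L} \<inter> {x<..<y}|lebesgue. g t)" .
  moreover have "{0<..<L} \<inter> {x<..<y} = {x<..<y}"
    using xy by auto
  ultimately show ?thesis by simp
qed

section \<open>Positivity of solutions\<close>

lemma solves_C_integral_form:
  assumes L: "0 < L" and a: "H_a L a" and h: "L2_on L h" and v: "solves_C L a h \<phi> v"
  obtains g where "set_integrable lebesgue {0<..<L} g"
    "\<And>x y. 0 < x \<Longrightarrow> x < y \<Longrightarrow> y < L \<Longrightarrow> v y - v x = (LINT t:{x<..<y}|lebesgue. g t)"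
    "AE t in lebesgue. t \<in> {0<..<L} \<longrightarrow> a t * g t = real_of_ereal (\<phi> (v t)) + h t"
proof -
  obtain g where g: "L2_on L g" "is_weak_deriv L v g"
    and eq: "\<And>\<psi>. test_fun L \<psi> \<Longrightarrow>
      (LINT x:{0<..<L}|lebesgue. a x * g x * \<psi> x) =
      (LINT x:{0<..<L}|lebesgue. (real_of_ereal (\<phi> (v x)) + h x) * \<psi> x)"
    using v unfolding solves_C_def by blast
  have gi: "set_integrable lebesgue {0<..<L} g"
    using g(1) by (rule L2_on_imp_set_integrable)
  obtain \<beta> where "AE x in lebesgue. x \<in> {0<..<L} \<longrightarrow> \<bar>a x\<bar> \<le> \<beta>"
    using a unfolding H_a_def by (force elim!: eventually_mono)
  then have "set_integrable lebesgue {0<..<L} (\<lambda>t. a t * g t)"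
    using a by (intro set_integrable_mult_bounded[OF gi]) (auto simp: H_a_def)
  moreover have "set_integrable lebesgue {0<..<L} (\<lambda>t. real_of_ereal (\<phi> (v t)) + h t)"
    using v h by (intro set_integral_add L2_on_imp_set_integrable) (auto simp: solves_C_def)
  ultimately have "AE t in lebesgue. t \<in> {0<..<L} \<longrightarrow> a t * g t = real_of_ereal (\<phi> (v t)) + h t"
    using L eq by (intro AE_eq_if_equal_on_test_funs) auto
  moreover have "v y - v x = (LINT t:{x<..<y}|lebesgue. g t)" if "0 < x" "x < y" "y < L" for x y
    using v g(2) that by (intro weak_deriv_integral_form[OF _ gi]) (auto simp: solves_C_def is_weak_deriv_def)
  ultimately show ?thesis using gi that by blast
qed

lemma set_integral_pos_if_AE_pos:
  fixes g :: "real \<Rightarrow> real"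
  assumes g: "set_integrable lebesgue {s<..<t} g" and st: "s < t"
    and pos: "AE r in lebesgue. r \<in> {s<..<t} \<longrightarrow> g r > 0"
  shows "(LINT r:{s<..<t}|lebesgue. g r) > 0"
proof -
  have G: "integrable lebesgue (\<lambda>r. indicator {s<..<t} r * g r)"
    using g by (simp add: set_integrable_def)
  have nonneg: "AE r in lebesgue. 0 \<le> indicator {s<..<t} r * g r"
    using pos by eventually_elim (auto simp: indicator_def)
  have "(LINT r:{s<..<t}|lebesgue. g r) \<noteq> 0"
  proof
    assume "(LINT r:{s<..<t}|lebesgue. g r) = 0"
    then have "AE r in lebesgue. indicator {s<..<t} r * g r = 0"
      using integral_nonneg_eq_0_iff_AE[OF G nonneg] by (simp add: set_lebesgue_integral_def)
    then have "AE r in lebesgue. r \<notin> {s<..<t}"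
      using pos by eventually_elim (auto simp: indicator_def)
    then have "emeasure lebesgue {s<..<t} = 0"
      by (subst (asm) AE_iff_measurable[of "{s<..<t}"]) auto
    then show False
      using st by (simp add: emeasure_completion)
  qed
  moreover have "(LINT r:{s<..<t}|lebesgue. g r) \<ge> 0"
    unfolding set_lebesgue_integral_def using nonneg by (intro integral_nonneg_AE) simp
  ultimately show ?thesis by simp
qed

lemma H_phi_real_large_near_pole:
  assumes "H_phi \<phi>" "\<phi> 0 = \<infinity>"
  obtains d where "d > 0" "\<And>s. \<bar>s\<bar> < d \<Longrightarrow> \<phi> s \<noteq> \<infinity> \<Longrightarrow> real_of_ereal (\<phi> s) > M"
proof -
  have "isCont \<phi> 0"
    using assms(1) by (simp add: H_phi_def continuous_on_eq_continuous_at)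
  then have "(\<phi> \<longlongrightarrow> \<infinity>) (at 0)"
    using assms(2) by (simp add: isCont_def)
  then have "\<forall>\<^sub>F s in at 0. \<phi> s > ereal M"
    by (rule order_tendstoD(1)) simp
  then obtain d where d: "d > 0" "\<And>s. s \<noteq> 0 \<Longrightarrow> dist s 0 < d \<Longrightarrow> \<phi> s > ereal M"
    unfolding eventually_at by blast
  show ?thesis
  proof (rule that[OF d(1)])
    fix s :: real
    assume s: "\<bar>s\<bar> < d" "\<phi> s \<noteq> \<infinity>"
    then have "\<phi> s > ereal M"
      using d(2)[of s] assms(2) by (cases "s = 0") (auto simp: dist_real_def)
    moreover have "\<phi> s \<noteq> -\<infinity>"
      using assms(1) by (simp add: H_phi_def)
    ultimately show "real_of_ereal (\<phi> s) > M"
      using s(2) by (cases "\<phi> s") auto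
  qed
qed

lemma positive_near_zero_if_strict_mono_where_small:
  fixes v :: "real \<Rightarrow> real"
  assumes v: "continuous_on {0..b} v" "v 0 = 0" and "b > 0" "d > 0"
    and mono: "\<And>s t. 0 < s \<Longrightarrow> s < t \<Longrightarrow> t \<le> b \<Longrightarrow> (\<forall>r\<in>{s..t}. \<bar>v r\<bar> < d) \<Longrightarrow> v s < v t"
  shows "\<exists>\<rho>>0. \<rho> \<le> b \<and> (\<forall>r. 0 < r \<and> r \<le> \<rho> \<longrightarrow> v r > 0)"
proof -
  have "0 \<in> {0..b}"
    using \<open>b > 0\<close> by simp
  then obtain \<rho>0 where \<rho>0: "\<rho>0 > 0" "\<forall>t\<in>{0..b}. dist t 0 < \<rho>0 \<longrightarrow> dist (v t) (v 0) < d"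
    using v(1) \<open>d > 0\<close> unfolding continuous_on_iff by blast
  define \<rho> where "\<rho> = min (\<rho>0 / 2) b"
  have \<rho>: "0 < \<rho>" "\<rho> \<le> b"
    using \<rho>0(1) \<open>b > 0\<close> by (auto simp: \<rho>_def)
  have small: "\<bar>v t\<bar> < d" if "0 \<le> t" "t \<le> \<rho>" for t
    using \<rho>0 that v(2) \<open>b > 0\<close> by (auto simp: \<rho>_def dist_real_def)
  have "v r > 0" if r: "0 < r" "r \<le> \<rho>" for r
  proof -
    have "\<forall>\<^sub>F s in at_right 0. s \<in> {0<..<r / 2}"
      using r by (intro eventually_at_right_real) auto
    then have "\<forall>\<^sub>F s in at_right 0. v s \<le> v (r / 2)"
      by eventually_elim (use \<rho> r in \<open>auto intro!: less_imp_le mono small\<close>)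
    then have "0 \<le> v (r / 2)"
      using continuous_on_Icc_at_rightD[OF v(1) \<open>b > 0\<close>] v(2)
      by (intro tendsto_upperbound[where F = "at_right 0"]) auto
    also have "v (r / 2) < v r"
      using \<rho> r by (intro mono) (auto intro!: small)
    finally show ?thesis .
  qed
  with \<rho> show ?thesis by blast
qed

lemma positive_if_strict_mono_where_small:
  fixes v :: "real \<Rightarrow> real"
  assumes v: "continuous_on {0..b} v" "v 0 = 0" and "d > 0"
    and mono: "\<And>s t. 0 < s \<Longrightarrow> s < t \<Longrightarrow> t \<le> b \<Longrightarrow> (\<forall>r\<in>{s..t}. \<bar>v r\<bar> < d) \<Longrightarrow> v s < v t"
    and x: "0 < x" "x \<le> b"
  shows "v x > 0"
proof (rule ccontr)
  assume "\<not> v x > 0"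
  have "\<exists>\<rho>>0. \<rho> \<le> b \<and> (\<forall>r. 0 < r \<and> r \<le> \<rho> \<longrightarrow> v r > 0)"
    by (rule positive_near_zero_if_strict_mono_where_small[OF v less_le_trans[OF x] \<open>d > 0\<close>]) (rule mono)
  then obtain \<rho> where \<rho>: "0 < \<rho>" "\<rho> \<le> b" and pos: "\<And>r. 0 < r \<Longrightarrow> r \<le> \<rho> \<Longrightarrow> v r > 0"
    by blast
  with \<open>\<not> v x > 0\<close> x have "\<rho> < x" by force
  have v_on: "continuous_on {\<rho>..t} v" if "t \<le> b" for t
    using \<rho> that by (intro continuous_on_subset[OF v(1)]) auto
  define Z where "Z = {t \<in> {\<rho>..x}. v t = 0}"
  have "Z \<noteq> {}"
    using IVT2'[of v x 0 \<rho>] \<open>\<not> v x > 0\<close> pos[OF \<rho>(1) order_refl] \<open>\<rho> < x\<close> v_on[OF x(2)]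
    by (auto simp: Z_def)
  moreover have "closed Z"
    unfolding Z_def by (rule continuous_closed_preimage_constant[OF v_on[OF x(2)]]) simp
  ultimately have "Inf Z \<in> Z"
    by (intro closed_contains_Inf) (auto simp: Z_def bdd_below_def)
  define p where "p = Inf Z"
  have p: "\<rho> < p" "p \<le> x" "v p = 0"
    using \<open>Inf Z \<in> Z\<close> pos[OF \<rho>(1) order_refl] by (auto simp: Z_def p_def order.order_iff_strict)
  have before_p: "v t > 0" if t: "\<rho> \<le> t" "t < p" for t
  proof (rule ccontr)
    assume "\<not> v t > 0"
    then obtain z where "\<rho> \<le> z" "z \<le> t" "v z = 0"
      using IVT2'[of v t 0 \<rho>] pos[OF \<rho>(1) order_refl] t v_on[of t] p x by auto
    then have "z \<in> Z" using t p by (auto simp: Z_def)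
    then have "p \<le> z" unfolding p_def by (intro cInf_lower) (auto simp: bdd_below_def Z_def)
    with \<open>z \<le> t\<close> \<open>t < p\<close> show False by simp
  qed
  have "p \<in> {0..b}"
    using p \<rho> x by auto
  then obtain \<sigma> where \<sigma>: "\<sigma> > 0" "\<forall>t\<in>{0..b}. dist t p < \<sigma> \<longrightarrow> dist (v t) (v p) < d"
    using v(1) \<open>d > 0\<close> unfolding continuous_on_iff by blast
  define q where "q = max \<rho> (p - \<sigma> / 2)"
  have q: "\<rho> \<le> q" "q < p"
    using p \<sigma> by (auto simp: q_def)
  have "v q < v p"
    using q \<rho> p x \<sigma> by (intro mono) (auto simp: q_def dist_real_def)
  then show False
    using before_p[OF q] p by simp
qed

lemma solves_C_strict_mono_where_small:
  assumes L: "0 < L" and a: "H_a L a" and h: "L2_on L h" and \<phi>: "H_phi \<phi>" "\<phi> 0 = \<infinity>"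
    and v: "solves_C L a h \<phi> v" and x: "x < L"
    and M: "AE t in lebesgue. t \<in> {0..x} \<longrightarrow> h t \<ge> - M"
  shows "\<exists>d>0. \<forall>s t. 0 < s \<and> s < t \<and> t \<le> x \<and> (\<forall>r\<in>{s..t}. \<bar>v r\<bar> < d) \<longrightarrow> v s < v t"
proof -
  obtain g where g: "set_integrable lebesgue {0<..<L} g"
    and ftc: "\<And>s t. 0 < s \<Longrightarrow> s < t \<Longrightarrow> t < L \<Longrightarrow> v t - v s = (LINT r:{s<..<t}|lebesgue. g r)"
    and ode: "AE t in lebesgue. t \<in> {0<..<L} \<longrightarrow> a t * g t = real_of_ereal (\<phi> (v t)) + h t"
    using solves_C_integral_form[OF L a h v] by blast
  obtain d where "d > 0" and d: "\<And>s. \<bar>s\<bar> < d \<Longrightarrow> \<phi> s \<noteq> \<infinity> \<Longrightarrow> real_of_ereal (\<phi> s) > M"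
    using H_phi_real_large_near_pole[OF \<phi>] by blast
  obtain \<alpha> \<beta> where "\<alpha> > 0" and \<alpha>: "AE t in lebesgue. t \<in> {0<..<L} \<longrightarrow> \<alpha> \<le> a t \<and> a t \<le> \<beta>"
    using a unfolding H_a_def by blast
  have finite: "AE t in lebesgue. t \<in> {0<..<L} \<longrightarrow> \<phi> (v t) \<noteq> \<infinity>"
    using v by (simp add: solves_C_def)
  have g_pos: "AE t in lebesgue. t \<in> {0<..x} \<and> \<bar>v t\<bar> < d \<longrightarrow> g t > 0"
    using ode M \<alpha> finite
  proof eventually_elim
    case (elim t)
    show ?case
    proof
      assume t: "t \<in> {0<..x} \<and> \<bar>v t\<bar> < d"
      then have "a t * g t > 0" "a t > 0"
        using elim d[of "v t"] x \<open>\<alpha> > 0\<close> by fastforce+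
      then show "g t > 0" by (simp add: zero_less_mult_iff)
    qed
  qed
  have "v s < v t" if "0 < s" "s < t" "t \<le> x" "\<forall>r\<in>{s..t}. \<bar>v r\<bar> < d" for s t
  proof -
    have "(LINT r:{s<..<t}|lebesgue. g r) > 0"
      using that x g_pos
      by (intro set_integral_pos_if_AE_pos set_integrable_subset[OF g]) (auto elim!: eventually_mono)
    then show ?thesis using ftc[of s t] that x by simp
  qed
  with \<open>d > 0\<close> show ?thesis by blast
qed

theorem mainTheorem12:
  fixes L :: real and a h v :: "real \<Rightarrow> real" and \<phi> :: "real \<Rightarrow> ereal"
  assumes "L > 0"
    and "H_a L a"
    and "L2_on L h"
    and "H_phi \<phi>" and "H_int \<phi>" and "H_bdd \<phi>"
    and "\<phi> 0 = \<infinity>"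
    and "\<forall>\<eta>. 0 < \<eta> \<and> \<eta> < L \<longrightarrow>
           (\<exists>M>0. AE x in lebesgue. x \<in> {0..L-\<eta>} \<longrightarrow> h x \<ge> - M)"
    and "solves_C L a h \<phi> v"
  shows "\<forall>x\<in>{0<..<L}. v x > 0"
proof
  fix x
  assume x: "x \<in> {0<..<L}"
  obtain M where "AE t in lebesgue. t \<in> {0..x} \<longrightarrow> h t \<ge> - M"
    using assms(8)[rule_format, of "L - x"] x by auto
  then obtain d where "d > 0"
    and mono: "\<And>s t. 0 < s \<Longrightarrow> s < t \<Longrightarrow> t \<le> x \<Longrightarrow> \<forall>r\<in>{s..t}. \<bar>v r\<bar> < d \<Longrightarrow> v s < v t"
    using solves_C_strict_mono_where_small[OF assms(1,2,3,4,7,9)] x by (metis greaterThanLessThan_iff)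
  moreover have "continuous_on {0..x} v" "v 0 = 0"
    using assms(9) x by (auto simp: solves_C_def intro: continuous_on_subset)
  ultimately show "v x > 0"
    using x by (intro positive_if_strict_mono_where_small[of x v d x] mono) auto
qed

end
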